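(* Let $F$ be a graph and $C$ a cycle of $F$ such that $(F,C)$ forms a conflict path. Then every vertex of $C$ is an attachment of at most two $C$-bridges.
   Context: Let $F$ be a graph and $C$ a cycle of $F$. A $C$-bridge is either a chord of $C$ (an edge not in $C$ with both endpoints on $C$) or a connected component of $F-V(C)$ together with all edges joining it to $C$ and their endpoints on $C$. The attachments $\mathrm{att}(X)$ of a $C$-bridge $X$ are the vertices of $C$ incident to edges of $X$. Two pairs $\{x,y\}$, $\{u,v\}$ of four distinct vertices of $C$ alternate if each of the two arcs of $C$ with endpoints $x,y$ contains exactly one of $u,v$; two vertex sets alternate if some pair from one alternates with some pair from the other. Two $C$-bridges conflict if they share at least three attachments or their attachment sets alternate; the conflict graph $\mathrm{Con}(C)$ has the $C$-bridges as vertices, two adjacent iff they conflict. The pair $(F,C)$ forms a conflict path if every $C$-bridge has exactly two attachments and $\mathrm{Con}(C)$ is a path. *)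

theory Defs
  imports Main
begin

definition graph :: "'a set \<Rightarrow> 'a set set \<Rightarrow> bool" where
  "graph V E \<longleftrightarrow> finite V \<and> (\<forall>e\<in>E. \<exists>a b. e = {a, b} \<and> a \<noteq> b \<and> a \<in> V \<and> b \<in> V)"

text \<open>A cycle is given by the cyclic list of its distinct vertices.\<close>
definition cyc_edges :: "'a list \<Rightarrow> 'a set set" where
  "cyc_edges cs = {{cs ! i, cs ! ((i + 1) mod length cs)} | i. i < length cs}"

definition is_cycle :: "'a set \<Rightarrow> 'a set set \<Rightarrow> 'a list \<Rightarrow> bool" where
  "is_cycle V E cs \<longleftrightarrow> distinct cs \<and> length cs \<ge> 3 \<and> set cs \<subseteq> V \<and> cyc_edges cs \<subseteq> E"

definition adj_out :: "'a set \<Rightarrow> 'a set set \<Rightarrow> 'a list \<Rightarrow> 'a \<Rightarrow> 'a \<Rightarrow> bool" where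
  "adj_out V E cs a b \<longleftrightarrow> {a, b} \<in> E \<and> a \<in> V - set cs \<and> b \<in> V - set cs"

definition components_out :: "'a set \<Rightarrow> 'a set set \<Rightarrow> 'a list \<Rightarrow> 'a set set" where
  "components_out V E cs = {{b. (adj_out V E cs)\<^sup>*\<^sup>* a b} | a. a \<in> V - set cs}"

text \<open>A C-bridge is represented as the pair (vertex set, edge set) of the subgraph.\<close>
definition comp_bridge :: "'a set \<Rightarrow> 'a set set \<Rightarrow> 'a list \<Rightarrow> 'a set \<Rightarrow> 'a set \<times> 'a set set" where
  "comp_bridge V E cs K =
     (K \<union> {c \<in> set cs. \<exists>k\<in>K. {k, c} \<in> E}, {e \<in> E. e \<inter> K \<noteq> {}})"

definition chords :: "'a set set \<Rightarrow> 'a list \<Rightarrow> 'a set set" where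
  "chords E cs = {e \<in> E. e \<notin> cyc_edges cs \<and> e \<subseteq> set cs}"

definition bridges :: "'a set \<Rightarrow> 'a set set \<Rightarrow> 'a list \<Rightarrow> ('a set \<times> 'a set set) set" where
  "bridges V E cs = (\<lambda>e. (e, {e})) ` chords E cs \<union> comp_bridge V E cs ` components_out V E cs"

definition att :: "'a list \<Rightarrow> 'a set \<times> 'a set set \<Rightarrow> 'a set" where
  "att cs X = {v \<in> set cs. \<exists>e\<in>snd X. v \<in> e}"

text \<open>Pairs {x,y} and {u,v} of four distinct cycle vertices alternate: each of the two arcs
  of C between x and y contains exactly one of u, v. With positions along the list cs,
  one arc consists of the vertices strictly between the positions of x and y.\<close>
definition pos :: "'a list \<Rightarrow> 'a \<Rightarrow> nat" where
  "pos cs x = (THE i. i < length cs \<and> cs ! i = x)"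

definition in_arc :: "'a list \<Rightarrow> 'a \<Rightarrow> 'a \<Rightarrow> 'a \<Rightarrow> bool" where
  "in_arc cs x y w \<longleftrightarrow> min (pos cs x) (pos cs y) < pos cs w
                       \<and> pos cs w < max (pos cs x) (pos cs y)"

definition pairs_alternate :: "'a list \<Rightarrow> 'a \<Rightarrow> 'a \<Rightarrow> 'a \<Rightarrow> 'a \<Rightarrow> bool" where
  "pairs_alternate cs x y u v \<longleftrightarrow>
     distinct [x, y, u, v] \<and> {x, y, u, v} \<subseteq> set cs \<and>
     (in_arc cs x y u \<longleftrightarrow> \<not> in_arc cs x y v)"

definition sets_alternate :: "'a list \<Rightarrow> 'a set \<Rightarrow> 'a set \<Rightarrow> bool" where
  "sets_alternate cs A B \<longleftrightarrow> (\<exists>x\<in>A. \<exists>y\<in>A. \<exists>u\<in>B. \<exists>v\<in>B. pairs_alternate cs x y u v)"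

definition conflict :: "'a list \<Rightarrow> 'a set \<times> 'a set set \<Rightarrow> 'a set \<times> 'a set set \<Rightarrow> bool" where
  "conflict cs X Y \<longleftrightarrow> card (att cs X \<inter> att cs Y) \<ge> 3 \<or> sets_alternate cs (att cs X) (att cs Y)"

definition conflict_graph_is_path :: "'a set \<Rightarrow> 'a set set \<Rightarrow> 'a list \<Rightarrow> bool" where
  "conflict_graph_is_path V E cs \<longleftrightarrow>
     (\<exists>ps. ps \<noteq> [] \<and> distinct ps \<and> set ps = bridges V E cs \<and>
        (\<forall>i<length ps. \<forall>j<length ps. i \<noteq> j \<longrightarrow>
            (conflict cs (ps ! i) (ps ! j) \<longleftrightarrow> i = j + 1 \<or> j = i + 1)))"

definition conflict_path :: "'a set \<Rightarrow> 'a set set \<Rightarrow> 'a list \<Rightarrow> bool" where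
  "conflict_path V E cs \<longleftrightarrow>
     (\<forall>X\<in>bridges V E cs. card (att cs X) = 2) \<and> conflict_graph_is_path V E cs"

end

theory Submission
  imports Defs
begin

(* Fix a cycle vertex v and number the cycle positions starting at v, i.e. rotate
   the positions so that v gets position 0.  Every C-bridge X has exactly two attachments, so
   it determines the integer interval [lo X, hi X] spanned by their rotated positions; alternation
   of attachment pairs is invariant under rotation and becomes crossing of these intervals.
   Hence the conflict path is a sequence of intervals I_0, ..., I_{m-1} in which two intervals
   cross iff they are consecutive.  Intervals attached at v all start at 0 and never cross.  If
   three of them occurred, the middle one I_i would have two neighbours I_{i-1}, I_{i+1} that
   cross it but not each other, so one is nested in the other; following the path away from the
   outer one, every later interval stays nested inside it and so cannot start at 0 -- but an
   interval at v lies beyond it. *)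

section \<open>Crossing intervals and rotation\<close>

definition crossing :: "nat \<Rightarrow> nat \<Rightarrow> nat \<Rightarrow> nat \<Rightarrow> bool" where
  "crossing l1 h1 l2 h2 \<longleftrightarrow> (l1 < l2 \<and> l2 < h1 \<and> h1 < h2) \<or> (l2 < l1 \<and> l1 < h2 \<and> h2 < h1)"

definition strictly_between :: "nat \<Rightarrow> nat \<Rightarrow> nat \<Rightarrow> bool" where
  "strictly_between x y z \<longleftrightarrow> (x < z \<and> z < y) \<or> (y < z \<and> z < x)"

definition separates :: "nat \<Rightarrow> nat \<Rightarrow> nat \<Rightarrow> nat \<Rightarrow> bool" where
  "separates x y z w \<longleftrightarrow> (strictly_between x y z \<longleftrightarrow> \<not> strictly_between x y w)"

lemma strictly_between_min_max: "(min x y < z \<and> z < max x y) \<longleftrightarrow> strictly_between x y z"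
  unfolding strictly_between_def min_def max_def by auto

lemma crossing_iff_separates:
  assumes "distinct [x, y, z, w]"
  shows "crossing (min x y) (max x y) (min z w) (max z w) \<longleftrightarrow> separates x y z w"
  using assms unfolding crossing_def separates_def strictly_between_def min_def max_def by auto

lemma crossing_distinct_ends:
  "crossing (min x y) (max x y) (min z w) (max z w) \<Longrightarrow> x \<noteq> z \<and> x \<noteq> w \<and> y \<noteq> z \<and> y \<noteq> w"
  unfolding crossing_def min_def max_def by (auto split: if_splits)

definition rot_step :: "nat \<Rightarrow> nat \<Rightarrow> nat" where
  "rot_step n x = (if x = 0 then n - 1 else x - 1)"

text \<open>Separation is a cyclic notion: it is invariant under one rotation step.  Only the point
  moving from 0 to n-1 needs care; it flips which of the two arcs is the inner one.\<close>
lemma separates_rot_step: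
  assumes "a < n" "b < n" "c < n" "d < n" "distinct [a, b, c, d]"
  shows "separates (rot_step n a) (rot_step n b) (rot_step n c) (rot_step n d) \<longleftrightarrow>
         separates a b c d"
proof -
  have shift: "strictly_between (x - 1) (y - 1) (z - 1) = strictly_between x y z"
    if "0 < x" "0 < y" "0 < z" for x y z
    using that unfolding strictly_between_def by auto
  have wrap: "strictly_between (n - 1) (y - 1) (z - 1) \<longleftrightarrow> \<not> strictly_between 0 y z"
    if "0 < y" "0 < z" "z \<noteq> y" "y < n" "z < n" for y z
    using that unfolding strictly_between_def by auto
  have ends: "\<not> strictly_between x y 0 \<and> \<not> strictly_between (x - 1) (y - 1) (n - 1)"
    if "x < n" "y < n" for x y
    using that unfolding strictly_between_def by auto
  have sym: "strictly_between x y z = strictly_between y x z" for x y z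
    unfolding strictly_between_def by auto
  consider "a = 0" | "b = 0" | "c = 0" | "d = 0" | "0 < a" "0 < b" "0 < c" "0 < d" by blast
  then show ?thesis
  proof cases
    case 1
    then show ?thesis using assms wrap[of b c] wrap[of b d]
      unfolding separates_def rot_step_def by auto
  next
    case 2
    then show ?thesis using assms wrap[of a c] wrap[of a d] sym
      unfolding separates_def rot_step_def by auto
  next
    case 3
    then show ?thesis using assms ends[of a b] shift[of a b d]
      unfolding separates_def rot_step_def by auto
  next
    case 4
    then show ?thesis using assms ends[of a b] shift[of a b c]
      unfolding separates_def rot_step_def by auto
  next
    case 5
    then show ?thesis using shift unfolding separates_def rot_step_def by auto
  qed
qed

definition rot :: "nat \<Rightarrow> nat \<Rightarrow> nat \<Rightarrow> nat" where
  "rot n s x = (if s \<le> x then x - s else x + n - s)"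

lemma rot_less: "x < n \<Longrightarrow> s < n \<Longrightarrow> rot n s x < n"
  unfolding rot_def by auto

lemma rot_inj: "x < n \<Longrightarrow> y < n \<Longrightarrow> s < n \<Longrightarrow> rot n s x = rot n s y \<Longrightarrow> x = y"
  unfolding rot_def by (auto split: if_splits)

lemma rot_self: "rot n s s = 0"
  unfolding rot_def by simp

lemma separates_rot:
  assumes "a < n" "b < n" "c < n" "d < n" "distinct [a, b, c, d]" and "s < n"
  shows "separates (rot n s a) (rot n s b) (rot n s c) (rot n s d) \<longleftrightarrow> separates a b c d"
  using \<open>s < n\<close>
proof (induction s)
  case 0
  then show ?case using assms by (simp add: rot_def)
next
  case (Suc s)
  have step: "rot n (Suc s) x = rot_step n (rot n s x)" if "x < n" for x
    using that Suc.prems unfolding rot_def rot_step_def by auto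
  have "distinct [rot n s a, rot n s b, rot n s c, rot n s d]"
    using assms Suc.prems rot_inj[of _ n _ s] by auto
  then have "separates (rot n (Suc s) a) (rot n (Suc s) b) (rot n (Suc s) c) (rot n (Suc s) d)
      \<longleftrightarrow> separates (rot n s a) (rot n s b) (rot n s c) (rot n s d)"
    using separates_rot_step[OF rot_less rot_less rot_less rot_less] assms Suc.prems step by simp
  then show ?case using Suc by simp
qed

section \<open>Paths of crossing intervals\<close>

definition interval_path :: "nat \<Rightarrow> (nat \<Rightarrow> nat) \<Rightarrow> (nat \<Rightarrow> nat) \<Rightarrow> bool" where
  "interval_path m lo hi \<longleftrightarrow>
     (\<forall>i<m. \<forall>j<m. i \<noteq> j \<longrightarrow> (crossing (lo i) (hi i) (lo j) (hi j) \<longleftrightarrow> i = j + 1 \<or> j = i + 1))"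

lemma interval_pathD:
  "interval_path m lo hi \<Longrightarrow> i < m \<Longrightarrow> j < m \<Longrightarrow> i \<noteq> j \<Longrightarrow>
   crossing (lo i) (hi i) (lo j) (hi j) \<longleftrightarrow> i = j + 1 \<or> j = i + 1"
  unfolding interval_path_def by blast

lemma interval_path_rev:
  assumes "interval_path m lo hi"
  shows "interval_path m (\<lambda>i. lo (m - 1 - i)) (\<lambda>i. hi (m - 1 - i))"
  unfolding interval_path_def
proof (intro allI impI)
  fix i j assume ij: "i < m" "j < m" "i \<noteq> j"
  then have "crossing (lo (m - 1 - i)) (hi (m - 1 - i)) (lo (m - 1 - j)) (hi (m - 1 - j)) \<longleftrightarrow>
     (m - 1 - i = m - 1 - j + 1 \<or> m - 1 - j = m - 1 - i + 1)"
    by (intro interval_pathD[OF assms]) auto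
  also have "\<dots> \<longleftrightarrow> (i = j + 1 \<or> j = i + 1)" using ij by auto
  finally show "crossing (lo (m - 1 - i)) (hi (m - 1 - i)) (lo (m - 1 - j)) (hi (m - 1 - j)) \<longleftrightarrow>
     (i = j + 1 \<or> j = i + 1)" .
qed

text \<open>If interval k+2 is nested in interval k, then so is every later interval: each one
  crosses its predecessor, which lies inside interval k, but must not cross interval k.\<close>
lemma interval_path_nested_tail:
  assumes path: "interval_path m lo hi"
    and nested: "lo k \<le> lo (k + 2)" "hi (k + 2) \<le> hi k"
    and j: "k + 2 \<le> j" "j < m"
  shows "lo k \<le> lo j \<and> hi j \<le> hi k"
  using j
proof (induction j rule: dec_induct)
  case base
  then show ?case using nested by simp
next
  case (step j)
  have "crossing (lo j) (hi j) (lo (Suc j)) (hi (Suc j))"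
    using interval_pathD[OF path, of j "Suc j"] step.prems by auto
  moreover have "\<not> crossing (lo k) (hi k) (lo (Suc j)) (hi (Suc j))"
    using interval_pathD[OF path, of k "Suc j"] step.hyps step.prems by auto
  moreover have "lo k \<le> lo j \<and> hi j \<le> hi k" using step by simp
  ultimately show ?case unfolding crossing_def by auto
qed

text \<open>Intervals starting at 0 pairwise do not cross, and a crossing path contains at most two
  of them.  Otherwise the neighbours of the middle one both cross it but not each other, hence
  are nested (and start after 0); by the previous lemma the path then stays inside the outer
  neighbour on the side of the inner one, missing the first or the last interval at 0.\<close>
lemma interval_path_three_at_zero_sorted:
  assumes path: "interval_path m lo hi"
    and ord: "i1 < i2" "i2 < i3" "i3 < m"
    and zero: "lo i1 = 0" "lo i2 = 0" "lo i3 = 0"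
  shows False
proof -
  define c1 c2 where "c1 = i2 - 1" and "c2 = i2 + 1"
  have c: "c1 + 1 = i2" "c2 = i2 + 1" "c2 < m" using ord unfolding c1_def c2_def by auto
  have x1: "crossing (lo c1) (hi c1) (lo i2) (hi i2)"
    using interval_pathD[OF path, of c1 i2] c ord by auto
  have x2: "crossing (lo c2) (hi c2) (lo i2) (hi i2)"
    using interval_pathD[OF path, of c2 i2] c ord by auto
  have x3: "\<not> crossing (lo c1) (hi c1) (lo c2) (hi c2)"
    using interval_pathD[OF path, of c1 c2] c by auto
  have start: "0 < lo c1" "0 < lo c2" using x1 x2 zero unfolding crossing_def by auto
  have "(lo c1 \<le> lo c2 \<and> hi c2 \<le> hi c1) \<or> (lo c2 \<le> lo c1 \<and> hi c1 \<le> hi c2)"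
    using x1 x2 x3 zero unfolding crossing_def by auto
  then show False
  proof
    assume "lo c1 \<le> lo c2 \<and> hi c2 \<le> hi c1"
    then have "lo c1 \<le> lo i3"
      using interval_path_nested_tail[OF path, of c1 i3] c ord by auto
    then show False using start zero by simp
  next
    assume nest: "lo c2 \<le> lo c1 \<and> hi c1 \<le> hi c2"
    have e: "m - 1 - (m - 1 - c2) = c2" "m - 1 - (m - 1 - c2 + 2) = c1" "m - 1 - (m - 1 - i1) = i1"
      using c ord by auto
    have "lo c2 \<le> lo i1"
      using interval_path_nested_tail[OF interval_path_rev[OF path], of "m - 1 - c2" "m - 1 - i1"]
        nest c ord e by auto
    then show False using start zero by simp
  qed
qed

lemma interval_path_no_three_at_zero:
  assumes "interval_path m lo hi"
    and "i1 < m" "i2 < m" "i3 < m" "distinct [i1, i2, i3]"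
    and "lo i1 = 0" "lo i2 = 0" "lo i3 = 0"
  shows False
  using assms interval_path_three_at_zero_sorted[OF assms(1)]
  by (metis distinct_length_2_or_more distinct_singleton linorder_neqE_nat)

section \<open>Positions on the cycle\<close>

lemma pos_nth: "distinct cs \<Longrightarrow> i < length cs \<Longrightarrow> pos cs (cs ! i) = i"
  unfolding pos_def by (rule the_equality) (auto simp: nth_eq_iff_index_eq)

lemma pos_in_set:
  assumes "x \<in> set cs" "distinct cs"
  shows "pos cs x < length cs" "cs ! pos cs x = x"
proof -
  obtain i where "i < length cs" "cs ! i = x" using assms(1) by (auto simp: in_set_conv_nth)
  then show "pos cs x < length cs" "cs ! pos cs x = x" using pos_nth[OF assms(2)] by auto
qed

lemma pos_inj: "distinct cs \<Longrightarrow> x \<in> set cs \<Longrightarrow> y \<in> set cs \<Longrightarrow> pos cs x = pos cs y \<Longrightarrow> x = y"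
  by (metis pos_in_set(2))

lemma sets_alternate_pairs:
  assumes "a \<noteq> b" "c \<noteq> d"
  shows "sets_alternate cs {a, b} {c, d} \<longleftrightarrow> pairs_alternate cs a b c d"
proof
  have swap1: "pairs_alternate cs x y u w \<Longrightarrow> pairs_alternate cs y x u w" for x y u w
    unfolding pairs_alternate_def in_arc_def by (auto simp: min.commute max.commute)
  have swap2: "pairs_alternate cs x y u w \<Longrightarrow> pairs_alternate cs x y w u" for x y u w
    unfolding pairs_alternate_def by auto
  assume "sets_alternate cs {a, b} {c, d}"
  then obtain x y u w where xy: "x \<in> {a, b}" "y \<in> {a, b}" "u \<in> {c, d}" "w \<in> {c, d}"
    and p: "pairs_alternate cs x y u w" unfolding sets_alternate_def by blast
  have "x \<noteq> y" "u \<noteq> w" using p unfolding pairs_alternate_def by auto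
  then have "(x = a \<and> y = b \<or> x = b \<and> y = a) \<and> (u = c \<and> w = d \<or> u = d \<and> w = c)"
    using xy by auto
  then show "pairs_alternate cs a b c d" using p swap1 swap2 by metis
next
  assume "pairs_alternate cs a b c d"
  then show "sets_alternate cs {a, b} {c, d}" unfolding sets_alternate_def by blast
qed

definition rot_pos :: "'a list \<Rightarrow> nat \<Rightarrow> 'a set \<Rightarrow> nat set" where
  "rot_pos cs s A = (\<lambda>x. rot (length cs) s (pos cs x)) ` A"

lemma Min_rot_pos_self:
  assumes "finite A" "v \<in> A"
  shows "Min (rot_pos cs (pos cs v) A) = 0"
proof -
  have "0 \<in> rot_pos cs (pos cs v) A"
    using assms(2) rot_self[of "length cs" "pos cs v"] unfolding rot_pos_def by (metis image_eqI)
  moreover have "finite (rot_pos cs (pos cs v) A)" unfolding rot_pos_def using assms(1) by simp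
  ultimately show ?thesis using Min_le[of "rot_pos cs (pos cs v) A" 0] by simp
qed

text \<open>For two-element sets of cycle vertices, conflict (sharing three vertices is impossible)
  is exactly crossing of the intervals spanned by their rotated positions.\<close>
lemma conflict_iff_crossing:
  assumes dc: "distinct cs" and sub: "A \<subseteq> set cs" "B \<subseteq> set cs"
    and two: "card A = 2" "card B = 2" and s: "s < length cs"
  shows "(3 \<le> card (A \<inter> B) \<or> sets_alternate cs A B) \<longleftrightarrow>
    crossing (Min (rot_pos cs s A)) (Max (rot_pos cs s A)) (Min (rot_pos cs s B)) (Max (rot_pos cs s B))"
proof -
  let ?K = "\<lambda>x. rot (length cs) s (pos cs x)"
  obtain a b where A: "A = {a, b}" "a \<noteq> b" using two(1) card_2_iff by metis
  obtain c d where B: "B = {c, d}" "c \<noteq> d" using two(2) card_2_iff by metis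
  have "card (A \<inter> B) \<le> 2" using two(1) card_mono[of A "A \<inter> B"] A by auto
  then have conflict: "(3 \<le> card (A \<inter> B) \<or> sets_alternate cs A B) \<longleftrightarrow> pairs_alternate cs a b c d"
    using sets_alternate_pairs[OF A(2) B(2)] A B by auto
  have ends: "Min (rot_pos cs s A) = min (?K a) (?K b)" "Max (rot_pos cs s A) = max (?K a) (?K b)"
    "Min (rot_pos cs s B) = min (?K c) (?K d)" "Max (rot_pos cs s B) = max (?K c) (?K d)"
    using A B unfolding rot_pos_def by auto
  have inS: "a \<in> set cs" "b \<in> set cs" "c \<in> set cs" "d \<in> set cs" using sub A B by auto
  then have pl: "pos cs a < length cs" "pos cs b < length cs" "pos cs c < length cs" "pos cs d < length cs"
    using pos_in_set(1)[OF _ dc] by auto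
  show ?thesis
  proof (cases "distinct [a, b, c, d]")
    case True
    then have dp: "distinct [pos cs a, pos cs b, pos cs c, pos cs d]"
      using pos_inj[OF dc] inS by auto
    have "pairs_alternate cs a b c d \<longleftrightarrow> separates (pos cs a) (pos cs b) (pos cs c) (pos cs d)"
      unfolding pairs_alternate_def in_arc_def separates_def strictly_between_min_max
      using True inS by auto
    also have "\<dots> \<longleftrightarrow> separates (?K a) (?K b) (?K c) (?K d)"
      using separates_rot[OF pl dp s] by simp
    also have "\<dots> \<longleftrightarrow> crossing (min (?K a) (?K b)) (max (?K a) (?K b)) (min (?K c) (?K d)) (max (?K c) (?K d))"
    proof -
      have "distinct [?K a, ?K b, ?K c, ?K d]"
        using dp pl s rot_inj[of _ "length cs" _ s] by auto
      then show ?thesis using crossing_iff_separates by simp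
    qed
    finally show ?thesis using conflict ends by simp
  next
    case False
    then have "\<not> pairs_alternate cs a b c d" unfolding pairs_alternate_def by auto
    moreover have "\<not> crossing (min (?K a) (?K b)) (max (?K a) (?K b)) (min (?K c) (?K d)) (max (?K c) (?K d))"
      using crossing_distinct_ends False A(2) B(2) by fastforce
    ultimately show ?thesis using conflict ends by simp
  qed
qed

section \<open>The conflict path as a path of intervals\<close>

lemma conflict_path_interval_path:
  assumes cyc: "is_cycle V E cs" and cp: "conflict_path V E cs" and s: "s < length cs"
  obtains ps where "set ps = bridges V E cs"
    "interval_path (length ps) (\<lambda>i. Min (rot_pos cs s (att cs (ps ! i))))
                               (\<lambda>i. Max (rot_pos cs s (att cs (ps ! i))))"
proof -
  have dc: "distinct cs" using cyc unfolding is_cycle_def by auto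
  have two: "\<And>X. X \<in> bridges V E cs \<Longrightarrow> card (att cs X) = 2"
    using cp unfolding conflict_path_def by auto
  have sub: "\<And>X. att cs X \<subseteq> set cs" unfolding att_def by auto
  obtain ps where ps: "set ps = bridges V E cs"
    and conf: "\<And>i j. i < length ps \<Longrightarrow> j < length ps \<Longrightarrow> i \<noteq> j \<Longrightarrow>
            (conflict cs (ps ! i) (ps ! j) \<longleftrightarrow> i = j + 1 \<or> j = i + 1)"
    using cp unfolding conflict_path_def conflict_graph_is_path_def by blast
  let ?lo = "\<lambda>i. Min (rot_pos cs s (att cs (ps ! i)))"
  let ?hi = "\<lambda>i. Max (rot_pos cs s (att cs (ps ! i)))"
  have "interval_path (length ps) ?lo ?hi"
    unfolding interval_path_def
  proof (intro allI impI)
    fix i j assume ij: "i < length ps" "j < length ps" "i \<noteq> j"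
    have "card (att cs (ps ! i)) = 2" "card (att cs (ps ! j)) = 2"
      using two nth_mem[OF ij(1)] nth_mem[OF ij(2)] ps by simp_all
    then have "conflict cs (ps ! i) (ps ! j) \<longleftrightarrow> crossing (?lo i) (?hi i) (?lo j) (?hi j)"
      unfolding conflict_def using conflict_iff_crossing[OF dc sub sub _ _ s] by blast
    then show "crossing (?lo i) (?hi i) (?lo j) (?hi j) \<longleftrightarrow> i = j + 1 \<or> j = i + 1"
      using conf[OF ij] by simp
  qed
  then show ?thesis by (rule that[OF ps])
qed

lemma three_indices:
  assumes "\<not> card {x \<in> set xs. P x} \<le> 2"
  obtains i1 i2 i3 where "distinct [i1, i2, i3]" "i1 < length xs" "i2 < length xs" "i3 < length xs"
    "P (xs ! i1)" "P (xs ! i2)" "P (xs ! i3)"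
proof -
  obtain T where T: "T \<subseteq> {x \<in> set xs. P x}" "card T = 3"
    using obtain_subset_with_card_n[of 3 "{x \<in> set xs. P x}"] assms by auto
  then obtain x1 x2 x3 where x: "T = {x1, x2, x3}" "x1 \<noteq> x2" "x2 \<noteq> x3" "x1 \<noteq> x3"
    unfolding card_3_iff by blast
  then have "x1 \<in> set xs" "x2 \<in> set xs" "x3 \<in> set xs" "P x1" "P x2" "P x3" using T(1) by auto
  then obtain i1 i2 i3 where i: "i1 < length xs" "i2 < length xs" "i3 < length xs"
    and at: "xs ! i1 = x1" "xs ! i2 = x2" "xs ! i3 = x3"
    by (meson in_set_conv_nth)
  have "distinct [i1, i2, i3]" using x(2-4) at by auto
  then show ?thesis
    by (rule that[OF _ i]) (simp_all add: at \<open>P x1\<close> \<open>P x2\<close> \<open>P x3\<close>)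
qed

theorem lemma24:
  fixes V :: "'a set" and E :: "'a set set" and cs :: "'a list"
  assumes "graph V E"
    and "is_cycle V E cs"
    and "conflict_path V E cs"
  shows "\<forall>v\<in>set cs. card {X \<in> bridges V E cs. v \<in> att cs X} \<le> 2"
proof (rule ballI, rule ccontr)
  fix v assume v: "v \<in> set cs" and many: "\<not> card {X \<in> bridges V E cs. v \<in> att cs X} \<le> 2"
  have dc: "distinct cs" using assms(2) unfolding is_cycle_def by auto
  have s: "pos cs v < length cs" using pos_in_set(1)[OF v dc] .
  obtain ps where ps: "set ps = bridges V E cs"
    and path: "interval_path (length ps) (\<lambda>i. Min (rot_pos cs (pos cs v) (att cs (ps ! i))))
                                         (\<lambda>i. Max (rot_pos cs (pos cs v) (att cs (ps ! i))))"
    by (rule conflict_path_interval_path[OF assms(2,3) s])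
  text \<open>Three bridges attached at v give three intervals of the path starting at 0.\<close>
  obtain i1 i2 i3 where "distinct [i1, i2, i3]" "i1 < length ps" "i2 < length ps" "i3 < length ps"
    "v \<in> att cs (ps ! i1)" "v \<in> att cs (ps ! i2)" "v \<in> att cs (ps ! i3)"
    using three_indices[of ps "\<lambda>X. v \<in> att cs X"] many ps by auto
  moreover have fin: "finite (att cs X)" for X unfolding att_def by simp
  ultimately show False
    by (intro interval_path_no_three_at_zero[OF path, of i1 i2 i3] Min_rot_pos_self fin)
qed

end
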